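(* For every election, every candidate that \textsc{PluralityMatching} may return (i.e.\ every candidate $a$ whose integral domination graph $G(a)$ admits a perfect matching) lies in the matching uncovered set. Consequently, the matching uncovered set of every election is non-empty.
   Context: An election: voters $V$ (finite, nonempty), candidates $C$ (finite, nonempty), a profile of linear orders $\sigma_i$ over $C$; $a\succeq_i c$ means $a=c$ or $i$ ranks $a$ above $c$; $\mathrm{top}(i)$ is $i$'s first choice. The integral domination graph $G(a)$ is the bipartite graph with both sides copies of $V$ and edge $(i,j)$ iff $a\succeq_i\mathrm{top}(j)$. The separation graph $G(a,b)$ of candidates $a,b$ is the bipartite graph with both sides copies of $V$ and edge $(i,j)$ iff there exists $c\in C$ with $a\succeq_i c$ and $c\succeq_j b$. The matching uncovered set is the set of candidates $a$ such that for every $b\in C$, $G(a,b)$ admits a perfect matching. \textsc{PluralityMatching} returns an arbitrary candidate $a$ whose $G(a)$ admits a perfect matching. *)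

theory Defs
  imports Main
begin

(* A profile: for each voter i, R i is a linear order on C, where (a,c) \<in> R i
   means  a \<succeq>_i c  (a = c or i ranks a above c). *)
definition election :: "'v set \<Rightarrow> 'c set \<Rightarrow> ('v \<Rightarrow> ('c \<times> 'c) set) \<Rightarrow> bool" where
  "election V C R \<longleftrightarrow> finite V \<and> V \<noteq> {} \<and> finite C \<and> C \<noteq> {} \<and>
     (\<forall>i\<in>V. R i \<subseteq> C \<times> C \<and> linear_order_on C (R i))"

definition top_choice :: "'c set \<Rightarrow> ('v \<Rightarrow> ('c \<times> 'c) set) \<Rightarrow> 'v \<Rightarrow> 'c" where
  "top_choice C R i = (THE c. c \<in> C \<and> (\<forall>d\<in>C. (c, d) \<in> R i))"

(* bipartite graph with both sides copies of V, edges given by E; perfect matching =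
   a bijection f : V \<rightarrow> V with every (i, f i) an edge *)
definition has_perfect_matching :: "'v set \<Rightarrow> ('v \<Rightarrow> 'v \<Rightarrow> bool) \<Rightarrow> bool" where
  "has_perfect_matching V E \<longleftrightarrow> (\<exists>f. bij_betw f V V \<and> (\<forall>i\<in>V. E i (f i)))"

definition dom_graph :: "'c set \<Rightarrow> ('v \<Rightarrow> ('c \<times> 'c) set) \<Rightarrow> 'c \<Rightarrow> 'v \<Rightarrow> 'v \<Rightarrow> bool" where
  "dom_graph C R a i j \<longleftrightarrow> (a, top_choice C R j) \<in> R i"

definition sep_graph :: "'c set \<Rightarrow> ('v \<Rightarrow> ('c \<times> 'c) set) \<Rightarrow> 'c \<Rightarrow> 'c \<Rightarrow> 'v \<Rightarrow> 'v \<Rightarrow> bool" where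
  "sep_graph C R a b i j \<longleftrightarrow> (\<exists>c\<in>C. (a, c) \<in> R i \<and> (c, b) \<in> R j)"

definition matching_uncovered_set :: "'v set \<Rightarrow> 'c set \<Rightarrow> ('v \<Rightarrow> ('c \<times> 'c) set) \<Rightarrow> 'c set" where
  "matching_uncovered_set V C R =
     {a \<in> C. \<forall>b\<in>C. has_perfect_matching V (sep_graph C R a b)}"

end

theory Submission
  imports Defs
begin

(* A perfect matching f of G(a) is one of every G(a,b) as well, with the top choice of voter
   f i as the intermediate candidate.  For existence, match the voters to seats labelled by
   candidates (for G(a): the voters themselves, labelled by their top choices) by induction:
   remove a voter i and give i the seat whose label i ranks lowest; the remaining voters are
   matched to the remaining seats below a common remaining label a, and i ranks a weakly
   above its own seat as well. *)

lemma linear_order_on_finite_has_least: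
  assumes "linear_order_on C r" "finite S" "S \<noteq> {}" "S \<subseteq> C"
  shows "\<exists>c\<in>S. \<forall>x\<in>S. (c, x) \<in> r"
  using assms(2-4)
proof (induction S rule: finite_ne_induct)
  case (singleton x)
  then show ?case using assms(1) by (auto simp: order_on_defs refl_on_def)
next
  case (insert x F)
  then obtain c where c: "c \<in> F" "\<forall>y\<in>F. (c, y) \<in> r" by auto
  then have "(x, c) \<in> r \<or> (c, x) \<in> r"
    using assms(1) insert.prems
    by (cases "x = c") (auto simp: order_on_defs refl_on_def total_on_def)
  then show ?case
    using c assms(1) insert.prems by (auto simp: order_on_defs refl_on_def dest: transD)
qed

lemma linear_order_on_finite_has_greatest:
  assumes "linear_order_on C r" "finite S" "S \<noteq> {}" "S \<subseteq> C"
  shows "\<exists>c\<in>S. \<forall>x\<in>S. (x, c) \<in> r"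
  using linear_order_on_finite_has_least[of C "r\<inverse>"] assms by simp

lemma bij_betw_fun_upd_insert:
  assumes "bij_betw f A (B - {b})" "a \<notin> A" "b \<in> B"
  shows "bij_betw (f(a := b)) (insert a A) B"
proof -
  have "bij_betw (f(a := b)) A (B - {b})"
    using assms(1,2) by (subst bij_betw_cong[where g = f]) auto
  then show ?thesis
    using assms(2,3) bij_betw_combine[of "f(a := b)" A "B - {b}" "{a}" "{b}"]
    by (auto simp: insert_absorb bij_betw_def)
qed

lemma has_perfect_matching_mono:
  assumes "has_perfect_matching V E" "\<And>i j. i \<in> V \<Longrightarrow> j \<in> V \<Longrightarrow> E i j \<Longrightarrow> E' i j"
  shows "has_perfect_matching V E'"
  using assms unfolding has_perfect_matching_def by (meson bij_betwE)

lemma top_choice: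
  assumes "finite C" "C \<noteq> {}" "linear_order_on C (R i)"
  shows top_choice_in: "top_choice C R i \<in> C"
    and top_choice_above: "d \<in> C \<Longrightarrow> (top_choice C R i, d) \<in> R i"
proof -
  obtain c where c: "c \<in> C" "\<forall>d\<in>C. (c, d) \<in> R i"
    using linear_order_on_finite_has_least[OF assms(3,1,2) order_refl] by blast
  with assms(3) have "\<exists>!c. c \<in> C \<and> (\<forall>d\<in>C. (c, d) \<in> R i)"
    by (auto simp: order_on_defs dest: antisymD)
  then have "top_choice C R i \<in> C \<and> (\<forall>d\<in>C. (top_choice C R i, d) \<in> R i)"
    unfolding top_choice_def by (rule theI')
  then show "top_choice C R i \<in> C" "d \<in> C \<Longrightarrow> (top_choice C R i, d) \<in> R i"
    by simp_all
qed

lemma dom_graph_imp_sep_graph: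
  assumes "election V C R" "j \<in> V" "b \<in> C" "dom_graph C R a i j"
  shows "sep_graph C R a b i j"
proof -
  have "top_choice C R j \<in> C" "(top_choice C R j, b) \<in> R j"
    using assms(1-3) top_choice_in[of C R j] top_choice_above[of C R j b]
    unfolding election_def by simp_all
  with assms(4) show ?thesis unfolding dom_graph_def sep_graph_def by blast
qed

lemma dom_graph_matching_imp_matching_uncovered:
  assumes "election V C R" "a \<in> C" "has_perfect_matching V (dom_graph C R a)"
  shows "a \<in> matching_uncovered_set V C R"
proof -
  have "has_perfect_matching V (sep_graph C R a b)" if "b \<in> C" for b
    using assms(3)
    by (rule has_perfect_matching_mono) (rule dom_graph_imp_sep_graph[OF assms(1) _ that])
  with assms(2) show ?thesis unfolding matching_uncovered_set_def by blast
qed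

lemma ex_dominating_label_bij_betw:
  assumes "finite V" "V \<noteq> {}" "\<forall>i\<in>V. linear_order_on C (R i)"
    and "finite W" "card W = card V" "t ` W \<subseteq> C"
  shows "\<exists>a\<in>t ` W. \<exists>f. bij_betw f V W \<and> (\<forall>i\<in>V. (a, t (f i)) \<in> R i)"
  using assms
proof (induction V arbitrary: W rule: finite_ne_induct)
  case (singleton i)
  then obtain w where w: "W = {w}" by (auto simp: card_1_singleton_iff)
  have "(t w, t w) \<in> R i"
    using singleton.prems w by (auto simp: order_on_defs refl_on_def)
  moreover have "bij_betw (\<lambda>_. w) {i} W" using w by (simp add: bij_betw_def)
  ultimately show ?case using w by blast
next
  case (insert i F)
  have "W \<noteq> {}" using insert.prems(2,3) insert.hyps(1,3) by auto
  then obtain w where w: "w \<in> W" "\<forall>x\<in>t ` W. (x, t w) \<in> R i"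
    using linear_order_on_finite_has_greatest[of C "R i" "t ` W"] insert.prems by auto
  have "card (W - {w}) = card F" using insert.prems(2,3) insert.hyps(1,3) w(1) by simp
  then obtain a f where a: "a \<in> t ` (W - {w})"
    and f: "bij_betw f F (W - {w})" "\<forall>j\<in>F. (a, t (f j)) \<in> R j"
    using insert.IH[of "W - {w}"] insert.prems by auto
  have "bij_betw (f(i := w)) (insert i F) W"
    using bij_betw_fun_upd_insert[OF f(1) insert.hyps(3) w(1)] .
  moreover have "\<forall>j\<in>insert i F. (a, t ((f(i := w)) j)) \<in> R j"
    using f(2) w(2) a insert.hyps(3) by auto
  ultimately show ?case using a by blast
qed

lemma ex_dom_graph_perfect_matching:
  assumes "election V C R"
  shows "\<exists>a\<in>C. has_perfect_matching V (dom_graph C R a)"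
proof -
  have V: "finite V" "V \<noteq> {}" and lo: "\<forall>i\<in>V. linear_order_on C (R i)"
    and C: "finite C" "C \<noteq> {}"
    using assms unfolding election_def by simp_all
  have tops: "top_choice C R ` V \<subseteq> C"
    using top_choice_in[OF C, of R] lo by blast
  obtain a f where "a \<in> top_choice C R ` V" "bij_betw f V V"
    "\<forall>i\<in>V. (a, top_choice C R (f i)) \<in> R i"
    using ex_dominating_label_bij_betw[OF V lo V(1) refl tops] by blast
  then have "a \<in> C" "has_perfect_matching V (dom_graph C R a)"
    using tops unfolding has_perfect_matching_def dom_graph_def by auto
  then show ?thesis ..
qed

theorem proposition1:
  fixes V :: "'v set" and C :: "'c set" and R :: "'v \<Rightarrow> ('c \<times> 'c) set"
  assumes "election V C R"
  shows "(\<forall>a\<in>C. has_perfect_matching V (dom_graph C R a)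
            \<longrightarrow> a \<in> matching_uncovered_set V C R)
         \<and> matching_uncovered_set V C R \<noteq> {}"
  using dom_graph_matching_imp_matching_uncovered[OF assms]
    ex_dom_graph_perfect_matching[OF assms]
  by blast

end
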